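(* Let $p$ be an odd prime and $q$ an even power of $p$. Let $\chi$ be a non-trivial multiplicative character of $\mathbb{F}_q$ and $A \subseteq \mathbb{F}_q$ with $|A|=\sqrt{q}$. For $c\in\mathbb{F}_q^*$ let $S(q,A;c)=\sum_{a \in A} e_p\big(\operatorname{Tr}(ac)\big)$. Then $\chi(a-b)=1$ for all $a,b \in A$ with $a \neq b$ if and only if for every $c \in \mathbb{F}_q^*$ the complex numbers $\chi(c)|S(q,A;c)|^2$ and $G(\chi)$ share the same argument.
   Context: $\operatorname{Tr}$ is the absolute trace $\mathbb{F}_q \to \mathbb{F}_p$ and $e_p(x)=e^{2\pi i x/p}$ for $x\in\mathbb{F}_p$. Multiplicative characters are extended by $\chi(0)=0$. $G(\chi)=\sum_{c \in \mathbb{F}_q}\chi(c)e_p(\operatorname{Tr}(c))$. The number $0$ is regarded as sharing the argument of any complex number. *)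

theory Defs
  imports "HOL-Analysis.Analysis"
begin

definition fdeg :: "'a::{field,finite} itself \<Rightarrow> nat" where
  "fdeg T = (THE n. CARD('a) = CHAR('a) ^ n)"

text \<open>Absolute trace F_q -> F_p (values in the prime subfield of 'a).\<close>
definition abs_trace :: "'a::{field,finite} \<Rightarrow> 'a" where
  "abs_trace x = (\<Sum>i<fdeg TYPE('a). x ^ (CHAR('a) ^ i))"

text \<open>e_p on the prime subfield: for y = of_int m, e_p(y) = exp(2 pi i m / p).\<close>
definition e_p :: "'a::{field,finite} \<Rightarrow> complex" where
  "e_p y = cis (2 * pi * real_of_int (SOME m::int. of_int m = y) / real CHAR('a))"

definition mult_char :: "('a::{field,finite} \<Rightarrow> complex) \<Rightarrow> bool" where
  "mult_char chi \<longleftrightarrow> chi 0 = 0 \<and> chi 1 = 1 \<and>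
     (\<forall>x y. x \<noteq> 0 \<longrightarrow> y \<noteq> 0 \<longrightarrow> chi (x * y) = chi x * chi y)"

definition gauss_sum :: "('a::{field,finite} \<Rightarrow> complex) \<Rightarrow> complex" where
  "gauss_sum chi = (\<Sum>c\<in>UNIV. chi c * e_p (abs_trace c))"

definition S_sum :: "'a::{field,finite} set \<Rightarrow> 'a \<Rightarrow> complex" where
  "S_sum A c = (\<Sum>a\<in>A. e_p (abs_trace (a * c)))"

definition same_arg :: "complex \<Rightarrow> complex \<Rightarrow> bool" where
  "same_arg z w \<longleftrightarrow> z = 0 \<or> w = 0 \<or> Arg z = Arg w"

end

theory Submission
  imports Defs "HOL-Computational_Algebra.Polynomial" "HOL-Computational_Algebra.Primes"
    "HOL-Number_Theory.Cong" "HOL-Library.Real_Mod"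
begin

text \<open>
  Write \<open>\<psi> = e\<^sub>p \<circ> Tr\<close>, \<open>G = G(\<chi>)\<close>, \<open>S(c) = S(q,A;c)\<close>, \<open>k = |A|\<close> and
  \<open>z(c) = \<chi>(c) |S(c)|\<^sup>2\<close>. Expanding \<open>|S(c)|\<^sup>2\<close> and using the orthogonality of \<open>\<psi>\<close>
  gives \<open>\<Sum>\<^sub>c z(c) = G D\<close>, where \<open>D\<close> is the sum of \<open>conj \<chi>(a - b)\<close> over \<open>a, b \<in> A\<close>
  (the diagonal vanishes since \<open>\<chi>(0) = 0\<close>); Parseval gives \<open>|G|\<^sup>2 = q = k\<^sup>2\<close> and
  \<open>\<Sum>\<^sub>c |z(c)| = qk - k\<^sup>2 = k \<cdot> k(k - 1)\<close>. So both conditions of the theorem are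
  equivalent to \<open>D = k(k - 1)\<close>: on the one hand this is the equality case of
  \<open>|D| \<le> k(k - 1)\<close>, i.e. \<open>\<chi>(a - b) = 1\<close> whenever \<open>a \<noteq> b\<close>; on the other it is the
  equality case of the triangle inequality \<open>|\<Sum>\<^sub>c z(c)| \<le> \<Sum>\<^sub>c |z(c)|\<close>, i.e. every \<open>z(c)\<close>
  has the argument of \<open>G\<close>.
\<close>

section \<open>Finite fields\<close>

text \<open>The library's \<open>finite_field_power_card_eq_same\<close> is stated for the type class
  \<open>finite_field\<close> and does not apply to \<open>{field,finite}\<close>.\<close>
lemma field_power_card_minus_one:
  fixes x :: "'a::{field,finite}"
  assumes "x \<noteq> 0"
  shows "x ^ (CARD('a) - 1) = 1"
proof -
  let ?U = "UNIV - {0::'a}"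
  have "bij_betw ((*) x) ?U ?U"
    by (rule bij_betwI[of _ _ _ "\<lambda>y. y / x"]) (use assms in auto)
  then have "\<Prod>?U = (\<Prod>y\<in>?U. x * y)"
    using prod.reindex_bij_betw[of "(*) x" ?U ?U "\<lambda>y. y"] by simp
  also have "\<dots> = x ^ card ?U * \<Prod>?U"
    by (simp add: prod.distrib)
  finally have "x ^ card ?U * \<Prod>?U = 1 * \<Prod>?U"
    by simp
  moreover have "\<Prod>?U \<noteq> 0"
    by simp
  ultimately show ?thesis
    by (simp add: card_Diff_singleton)
qed

lemma field_power_card:
  fixes x :: "'a::{field,finite}"
  shows "x ^ CARD('a) = x"
proof (cases "x = 0")
  case False
  have "CARD('a) = Suc (CARD('a) - 1)"
    by (simp add: Suc_diff_1)
  then show ?thesis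
    by (metis False field_power_card_minus_one mult.right_neutral power_Suc)
qed simp

lemma CARD_field_gt_1: "CARD('a::{field,finite}) > 1"
  using card_mono[of UNIV "{0::'a, 1}"] by simp

lemma prime_CHAR_finite_field: "prime CHAR('a::{field,finite})"
  by (rule prime_CHAR_semidom) (simp add: finite_imp_CHAR_pos)

lemma of_nat_power_CHAR: "(of_nat k :: 'a::{field,finite}) ^ CHAR('a) = of_nat k"
  by (induction k) (simp_all add: freshmans_dream prime_CHAR_finite_field prime_gt_0_nat)

text \<open>The elements fixed by Frobenius are the roots of \<open>X\<^sup>p - X\<close>, of which there are at most \<open>p\<close>;
  the \<open>p\<close> elements of the prime field are among them.\<close>
lemma power_CHAR_eq_self_imp_of_nat:
  fixes y :: "'a::{field,finite}"
  assumes "y ^ CHAR('a) = y"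
  shows "\<exists>k. y = of_nat k"
proof -
  let ?p = "CHAR('a)"
  let ?Q = "monom 1 ?p - monom 1 1 :: 'a poly"
  have p2: "?p \<ge> 2"
    using prime_CHAR_finite_field prime_ge_2_nat by blast
  have roots: "{z. poly ?Q z = 0} = {z. z ^ ?p = z}"
    by (simp add: poly_monom)
  have "coeff ?Q ?p = 1"
    using p2 by (simp add: coeff_monom)
  then have "?Q \<noteq> 0"
    by (metis coeff_0 zero_neq_one)
  have "card {z::'a. z ^ ?p = z} \<le> degree ?Q"
    using card_poly_roots_bound[OF \<open>?Q \<noteq> 0\<close>] by (simp only: roots)
  also have "degree ?Q \<le> ?p"
    using degree_diff_le_max[of "monom (1::'a) ?p" "monom 1 1"] degree_monom_le[of "1::'a"] p2
    by (metis (no_types) max.bounded_iff order.trans one_le_numeral)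
  finally have card_roots: "card {z::'a. z ^ ?p = z} \<le> ?p" .
  have "inj_on (of_nat :: nat \<Rightarrow> 'a) {..<?p}"
    by (auto simp: inj_on_def of_nat_eq_iff_cong_CHAR dest: cong_less_modulus_unique_nat)
  then have "card (of_nat ` {..<?p} :: 'a set) = ?p"
    by (simp add: card_image)
  moreover have "of_nat ` {..<?p} \<subseteq> {z::'a. z ^ ?p = z}"
    by (auto simp: of_nat_power_CHAR)
  ultimately have "of_nat ` {..<?p} = {z::'a. z ^ ?p = z}"
    using card_roots by (metis card_mono card_subset_eq finite le_antisym)
  then show ?thesis
    using assms by auto
qed

section \<open>Equality in the triangle inequality\<close>

lemma sum_eq_sum_norm_times_unit_iff:
  fixes z :: "'i \<Rightarrow> complex"
  assumes "finite I" and "norm u = 1"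
  shows "(\<Sum>i\<in>I. z i) = of_real (\<Sum>i\<in>I. norm (z i)) * u \<longleftrightarrow>
         (\<forall>i\<in>I. z i = of_real (norm (z i)) * u)"
proof
  have u: "u * cnj u = 1"
    using assms(2) by (simp flip: complex_norm_square)
  assume sum_eq: "(\<Sum>i\<in>I. z i) = of_real (\<Sum>i\<in>I. norm (z i)) * u"
  have "(\<Sum>i\<in>I. z i * cnj u) = of_real (\<Sum>i\<in>I. norm (z i))"
    using u by (simp add: sum_eq mult.assoc flip: sum_distrib_right)
  then have "(\<Sum>i\<in>I. Re (z i * cnj u)) = (\<Sum>i\<in>I. norm (z i))"
    by (metis Re_sum Re_complex_of_real)
  also have "\<dots> = (\<Sum>i\<in>I. norm (z i * cnj u))"
    using assms(2) by (simp add: norm_mult)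
  finally have "(\<Sum>i\<in>I. Re (z i * cnj u)) = (\<Sum>i\<in>I. norm (z i * cnj u))" .
  then have "Re (z i * cnj u) = norm (z i * cnj u)" if "i \<in> I" for i
    using sum_mono_inv[OF _ _ that assms(1)] complex_Re_le_cmod by blast
  then have "z i * cnj u \<in> \<real>\<^sub>\<ge>\<^sub>0" if "i \<in> I" for i
    using that by (simp add: norm_eq_Re_iff[symmetric])
  then have "z i * cnj u = of_real (norm (z i))" if "i \<in> I" for i
    using that assms(2) nonneg_Reals_cmod_eq_Re[of "z i * cnj u"]
    by (simp add: norm_mult complex_eq_iff complex_nonneg_Reals_iff)
  then show "\<forall>i\<in>I. z i = of_real (norm (z i)) * u"
    using u by (metis mult.assoc mult.commute mult_1_right)
next
  assume "\<forall>i\<in>I. z i = of_real (norm (z i)) * u"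
  then have "(\<Sum>i\<in>I. z i) = (\<Sum>i\<in>I. of_real (norm (z i)) * u)"
    by (intro sum.cong[OF refl]) blast
  then show "(\<Sum>i\<in>I. z i) = of_real (\<Sum>i\<in>I. norm (z i)) * u"
    by (simp add: sum_distrib_right)
qed

lemma same_arg_iff_eq_norm_times_sgn:
  assumes "w \<noteq> 0"
  shows "same_arg z w \<longleftrightarrow> z = of_real (norm z) * sgn w"
proof (cases "z = 0")
  case False
  have "Arg z = Arg w \<longleftrightarrow> sgn z = sgn w"
  proof
    assume "sgn z = sgn w"
    then show "Arg z = Arg w"
      using cis_Arg[OF assms] Arg_bounded[of w] by (intro cis_Arg_unique) auto
  qed (metis False assms cis_Arg)
  also have "\<dots> \<longleftrightarrow> z = of_real (norm z) * sgn w"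
    using False by (auto simp: sgn_eq field_simps)
  finally show ?thesis
    using False assms by (simp add: same_arg_def)
qed (simp add: same_arg_def)

lemma sum_eq_sum_norm_times_sgn_iff_same_arg:
  fixes z :: "'i \<Rightarrow> complex"
  assumes "finite I" and "w \<noteq> 0"
  shows "(\<Sum>i\<in>I. z i) = of_real (\<Sum>i\<in>I. norm (z i)) * sgn w \<longleftrightarrow> (\<forall>i\<in>I. same_arg (z i) w)"
  using sum_eq_sum_norm_times_unit_iff[OF assms(1), of "sgn w" z] assms(2)
  by (simp add: norm_sgn same_arg_iff_eq_norm_times_sgn)

section \<open>Multiplicative characters\<close>

lemma mult_char_mult:
  assumes "mult_char chi"
  shows "chi (x * y) = chi x * chi y"
  using assms unfolding mult_char_def by (cases "x = 0 \<or> y = 0") auto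

lemma mult_char_power:
  assumes "mult_char chi"
  shows "chi (x ^ k) = chi x ^ k"
proof (induction k)
  case 0
  show ?case
    using assms by (simp add: mult_char_def)
next
  case (Suc k)
  then show ?case
    by (simp add: mult_char_mult[OF assms])
qed

lemma norm_mult_char:
  fixes chi :: "'a::{field,finite} \<Rightarrow> complex"
  assumes "mult_char chi" "x \<noteq> 0"
  shows "norm (chi x) = 1"
proof -
  have "chi x ^ (CARD('a) - 1) = chi 1"
    by (simp only: field_power_card_minus_one[OF assms(2)] flip: mult_char_power[OF assms(1)])
  then have "chi x ^ (CARD('a) - 1) = 1"
    using assms(1) by (simp add: mult_char_def)
  then show ?thesis
    using power_eq_1_iff CARD_field_gt_1[where 'a='a] by fastforce
qed

lemma norm_mult_char_eq:
  fixes chi :: "'a::{field,finite} \<Rightarrow> complex"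
  assumes "mult_char chi"
  shows "norm (chi x) = of_bool (x \<noteq> 0)"
  using assms by (simp add: norm_mult_char mult_char_def)

lemma mult_char_times_cnj:
  fixes chi :: "'a::{field,finite} \<Rightarrow> complex"
  assumes "mult_char chi"
  shows "chi x * cnj (chi x) = of_bool (x \<noteq> 0)"
  by (simp add: norm_mult_char_eq[OF assms] flip: complex_norm_square)

lemma mult_char_inverse:
  fixes chi :: "'a::{field,finite} \<Rightarrow> complex"
  assumes "mult_char chi"
  shows "chi (inverse x) = cnj (chi x)"
proof (cases "x = 0")
  case False
  have "chi x * chi (inverse x) = chi 1"
    using False by (simp add: mult_char_mult[OF assms, symmetric])
  then have "chi x * chi (inverse x) = 1"
    using assms by (simp add: mult_char_def)
  moreover have "chi x * cnj (chi x) = 1"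
    using mult_char_times_cnj[OF assms, of x] False by simp
  ultimately show ?thesis
    by (metis mult.left_neutral mult.assoc mult.commute)
qed (use assms in \<open>simp add: mult_char_def\<close>)

lemma sum_mult_char:
  fixes chi :: "'a::{field,finite} \<Rightarrow> complex"
  assumes "mult_char chi" and "\<exists>x. x \<noteq> 0 \<and> chi x \<noteq> 1"
  shows "(\<Sum>c\<in>UNIV. chi c) = 0"
proof -
  obtain x where x: "x \<noteq> 0" "chi x \<noteq> 1"
    using assms(2) by blast
  have "(\<Sum>c\<in>UNIV. chi c) = (\<Sum>c\<in>UNIV. chi (x * c))"
    by (rule sum.reindex_bij_witness[of _ "\<lambda>c. x * c" "\<lambda>c. c / x"]) (use x in auto)
  also have "\<dots> = chi x * (\<Sum>c\<in>UNIV. chi c)"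
    by (simp add: mult_char_mult[OF assms(1)] sum_distrib_left)
  finally show ?thesis
    using x(2) by (metis mult_cancel_right1 mult.commute)
qed

lemma sum_norm_mult_char_diff:
  fixes chi :: "'a::{field,finite} \<Rightarrow> complex"
  assumes "mult_char chi" and "finite A"
  shows "(\<Sum>(a, b)\<in>A \<times> A. norm (chi (a - b))) = real (card A) * (real (card A) - 1)"
proof -
  have "(\<Sum>b\<in>A. norm (chi (a - b))) = real (card A) - 1" if "a \<in> A" for a
  proof -
    have "(\<Sum>b\<in>A. norm (chi (a - b))) = (\<Sum>b\<in>A - {a}. 1)"
      using assms that by (intro sum.mono_neutral_cong_right)
        (auto simp: norm_mult_char mult_char_def)
    moreover have "card A \<ge> 1"
      using assms(2) that by (metis One_nat_def Suc_leI card_gt_0_iff empty_iff)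
    ultimately show ?thesis
      using assms(2) that by (simp add: of_nat_diff)
  qed
  then show ?thesis
    by (simp add: sum.cartesian_product[symmetric])
qed

lemma sum_cnj_mult_char_diff_eq_iff:
  fixes chi :: "'a::{field,finite} \<Rightarrow> complex"
  assumes "mult_char chi" and "finite A"
  shows "(\<Sum>a\<in>A. \<Sum>b\<in>A. cnj (chi (a - b))) = of_real (real (card A) * (real (card A) - 1))
     \<longleftrightarrow> (\<forall>a\<in>A. \<forall>b\<in>A. a \<noteq> b \<longrightarrow> chi (a - b) = 1)"
proof -
  let ?w = "\<lambda>(a, b). cnj (chi (a - b))"
  have w_aligned_iff: "?w (a, b) = of_real (norm (?w (a, b))) * 1 \<longleftrightarrow> (a \<noteq> b \<longrightarrow> chi (a - b) = 1)"
    for a b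
    using assms(1) by (cases "a = b") (simp_all add: norm_mult_char mult_char_def)
  have "(\<Sum>a\<in>A. \<Sum>b\<in>A. cnj (chi (a - b))) = (\<Sum>p\<in>A \<times> A. ?w p)"
    by (simp add: sum.cartesian_product)
  moreover have "real (card A) * (real (card A) - 1) = (\<Sum>p\<in>A \<times> A. norm (?w p))"
    using sum_norm_mult_char_diff[OF assms] by (simp add: case_prod_unfold)
  ultimately have "(\<Sum>a\<in>A. \<Sum>b\<in>A. cnj (chi (a - b))) = of_real (real (card A) * (real (card A) - 1))
      \<longleftrightarrow> (\<forall>p\<in>A \<times> A. ?w p = of_real (norm (?w p)) * 1)"
    using sum_eq_sum_norm_times_unit_iff[of "A \<times> A" 1 ?w] assms(2) by simp
  also have "\<dots> \<longleftrightarrow> (\<forall>a\<in>A. \<forall>b\<in>A. a \<noteq> b \<longrightarrow> chi (a - b) = 1)"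
    by (simp only: split_paired_Ball_Sigma w_aligned_iff)
  finally show ?thesis .
qed

section \<open>Additive characters\<close>

locale additive_char =
  fixes psi :: "'a::{field,finite} \<Rightarrow> complex"
  assumes psi_add: "psi (x + y) = psi x * psi y"
    and norm_psi: "norm (psi x) = 1"
    and psi_nontrivial: "\<exists>x. psi x \<noteq> 1"
begin

lemma psi_zero: "psi 0 = 1"
proof -
  have "psi 0 * psi 0 = psi 0 * 1"
    using psi_add[of 0 0] by simp
  moreover have "psi 0 \<noteq> 0"
    using norm_psi[of 0] by auto
  ultimately show ?thesis
    by (metis mult_left_cancel)
qed

lemma psi_diff: "psi (x - y) = psi x * cnj (psi y)"
proof -
  have "psi (x - y) * (psi y * cnj (psi y)) = psi x * cnj (psi y)"
    using psi_add[of "x - y" y] by (simp add: mult.assoc)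
  then show ?thesis
    using norm_psi[of y] by (simp flip: complex_norm_square)
qed

lemma sum_psi_mult: "(\<Sum>c\<in>UNIV. psi (x * c)) = (if x = 0 then of_nat CARD('a) else 0)"
proof (cases "x = 0")
  case False
  obtain y where y: "psi y \<noteq> 1"
    using psi_nontrivial by blast
  have "(\<Sum>c\<in>UNIV. psi c) = (\<Sum>c\<in>UNIV. psi (c + y))"
    by (rule sum.reindex_bij_witness[of _ "\<lambda>c. c + y" "\<lambda>c. c - y"]) auto
  also have "\<dots> = (\<Sum>c\<in>UNIV. psi c) * psi y"
    by (simp only: psi_add sum_distrib_right)
  finally have "(\<Sum>c\<in>UNIV. psi c) = 0"
    using y by (simp only: mult_cancel_left1) blast
  moreover have "(\<Sum>c\<in>UNIV. psi (x * c)) = (\<Sum>c\<in>UNIV. psi c)"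
    by (rule sum.reindex_bij_witness[of _ "\<lambda>c. c / x" "\<lambda>c. x * c"]) (use False in auto)
  ultimately show ?thesis
    using False by simp
qed (simp add: psi_zero)

lemma parseval:
  fixes f :: "'a \<Rightarrow> complex"
  shows "(\<Sum>x\<in>UNIV. (norm (\<Sum>c\<in>UNIV. f c * psi (c * x)))\<^sup>2) = CARD('a) * (\<Sum>c\<in>UNIV. (norm (f c))\<^sup>2)"
proof -
  have expand: "f c * psi (c * x) * cnj (f d * psi (d * x)) = f c * cnj (f d) * psi ((c - d) * x)"
    for c d x
    by (simp add: psi_diff left_diff_distrib)
  have "of_real (\<Sum>x\<in>UNIV. (norm (\<Sum>c\<in>UNIV. f c * psi (c * x)))\<^sup>2)
      = (\<Sum>x\<in>UNIV. \<Sum>c\<in>UNIV. \<Sum>d\<in>UNIV. f c * cnj (f d) * psi ((c - d) * x))"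
    by (simp only: of_real_sum complex_norm_square cnj_sum sum_product expand)
  also have "\<dots> = (\<Sum>c\<in>UNIV. \<Sum>x\<in>UNIV. \<Sum>d\<in>UNIV. f c * cnj (f d) * psi ((c - d) * x))"
    by (rule sum.swap)
  also have "\<dots> = (\<Sum>c\<in>UNIV. \<Sum>d\<in>UNIV. \<Sum>x\<in>UNIV. f c * cnj (f d) * psi ((c - d) * x))"
    by (rule sum.cong[OF refl], rule sum.swap)
  also have "\<dots> = (\<Sum>c\<in>UNIV. \<Sum>d\<in>UNIV. f c * cnj (f d) * (\<Sum>x\<in>UNIV. psi ((c - d) * x)))"
    by (simp add: sum_distrib_left)
  also have "\<dots> = (\<Sum>c\<in>UNIV. \<Sum>d\<in>UNIV. if d = c then of_nat CARD('a) * (f c * cnj (f c)) else 0)"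
    by (intro sum.cong refl) (simp add: sum_psi_mult)
  also have "\<dots> = of_nat CARD('a) * (\<Sum>c\<in>UNIV. f c * cnj (f c))"
    by (simp add: sum_distrib_left)
  also have "\<dots> = of_real (CARD('a) * (\<Sum>c\<in>UNIV. (norm (f c))\<^sup>2))"
    by (simp only: of_real_mult of_real_of_nat_eq of_real_sum complex_norm_square)
  finally show ?thesis
    by (simp only: of_real_eq_iff)
qed

lemma twisted_gauss_sum:
  assumes "mult_char chi" and "\<exists>x. x \<noteq> 0 \<and> chi x \<noteq> 1"
  shows "(\<Sum>c\<in>UNIV. chi c * psi (c * x)) = cnj (chi x) * (\<Sum>c\<in>UNIV. chi c * psi c)"
proof (cases "x = 0")
  case True
  then show ?thesis
    using assms by (simp add: psi_zero sum_mult_char mult_char_def)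
next
  case False
  have "(\<Sum>c\<in>UNIV. chi c * psi (c * x)) = (\<Sum>c\<in>UNIV. chi (c * inverse x) * psi c)"
    by (rule sum.reindex_bij_witness[of _ "\<lambda>c. c * inverse x" "\<lambda>c. c * x"])
      (use False in \<open>auto simp: mult.assoc\<close>)
  then show ?thesis
    by (simp add: mult_char_mult[OF assms(1)] mult_char_inverse[OF assms(1)] sum_distrib_left
        mult_ac)
qed

lemma norm_gauss_sum:
  assumes "mult_char chi" and "\<exists>x. x \<noteq> 0 \<and> chi x \<noteq> 1"
  shows "(norm (\<Sum>c\<in>UNIV. chi c * psi c))\<^sup>2 = CARD('a)"
proof -
  let ?G = "\<Sum>c\<in>UNIV. chi c * psi c"
  have "(norm (chi x))\<^sup>2 = of_bool (x \<noteq> 0)" for x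
    using assms(1) by (simp add: norm_mult_char_eq)
  then have "(\<Sum>x\<in>UNIV. (norm (chi x))\<^sup>2) = real (CARD('a) - 1)"
    by (simp add: Collect_neg_eq Compl_eq_Diff_UNIV card_Diff_singleton)
  moreover have "(\<Sum>x\<in>UNIV. (norm (chi x))\<^sup>2 * (norm ?G)\<^sup>2) = CARD('a) * (\<Sum>c\<in>UNIV. (norm (chi c))\<^sup>2)"
    using parseval[of chi] by (simp add: twisted_gauss_sum[OF assms] norm_mult power_mult_distrib)
  ultimately have "real (CARD('a) - 1) * (norm ?G)\<^sup>2 = real (CARD('a) - 1) * CARD('a)"
    by (simp add: mult.commute flip: sum_distrib_right)
  then show ?thesis
    using CARD_field_gt_1[where 'a='a] by simp
qed

lemma sum_norm_char_sum:
  fixes A :: "'a set"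
  shows "(\<Sum>c\<in>UNIV. (norm (\<Sum>a\<in>A. psi (a * c)))\<^sup>2) = CARD('a) * card A"
proof -
  have "(\<Sum>c\<in>UNIV. of_bool (c \<in> A) * psi (c * x)) = (\<Sum>a\<in>A. psi (a * x))" for x
    by simp
  moreover have "(norm (of_bool (c \<in> A) :: complex))\<^sup>2 = of_bool (c \<in> A)" for c
    by (cases "c \<in> A") simp_all
  then have "(\<Sum>c\<in>UNIV. (norm (of_bool (c \<in> A) :: complex))\<^sup>2) = card A"
    by simp
  ultimately show ?thesis
    using parseval[of "\<lambda>a. of_bool (a \<in> A)"] by (simp only: of_nat_mult)
qed

lemma sum_mult_char_times_norm_char_sum:
  fixes A :: "'a set"
  assumes "mult_char chi" and "\<exists>x. x \<noteq> 0 \<and> chi x \<noteq> 1"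
  shows "(\<Sum>c\<in>UNIV. chi c * of_real ((norm (\<Sum>a\<in>A. psi (a * c)))\<^sup>2))
       = (\<Sum>c\<in>UNIV. chi c * psi c) * (\<Sum>a\<in>A. \<Sum>b\<in>A. cnj (chi (a - b)))"
proof -
  have "psi (a * c) * cnj (psi (b * c)) = psi (c * (a - b))" for a b c
    by (simp add: psi_diff algebra_simps)
  then have "of_real ((norm (\<Sum>a\<in>A. psi (a * c)))\<^sup>2) = (\<Sum>a\<in>A. \<Sum>b\<in>A. psi (c * (a - b)))" for c
    by (simp only: complex_norm_square cnj_sum sum_product)
  then have "(\<Sum>c\<in>UNIV. chi c * of_real ((norm (\<Sum>a\<in>A. psi (a * c)))\<^sup>2))
      = (\<Sum>c\<in>UNIV. \<Sum>a\<in>A. \<Sum>b\<in>A. chi c * psi (c * (a - b)))"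
    by (simp add: sum_distrib_left)
  also have "\<dots> = (\<Sum>a\<in>A. \<Sum>c\<in>UNIV. \<Sum>b\<in>A. chi c * psi (c * (a - b)))"
    by (rule sum.swap)
  also have "\<dots> = (\<Sum>a\<in>A. \<Sum>b\<in>A. \<Sum>c\<in>UNIV. chi c * psi (c * (a - b)))"
    by (rule sum.cong[OF refl], rule sum.swap)
  also have "\<dots> = (\<Sum>a\<in>A. \<Sum>b\<in>A. (\<Sum>c\<in>UNIV. chi c * psi c) * cnj (chi (a - b)))"
    by (simp add: twisted_gauss_sum[OF assms] mult.commute)
  also have "\<dots> = (\<Sum>c\<in>UNIV. chi c * psi c) * (\<Sum>a\<in>A. \<Sum>b\<in>A. cnj (chi (a - b)))"
    by (simp only: sum_distrib_left)
  finally show ?thesis .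
qed

lemma sum_norm_mult_char_times_norm_char_sum:
  fixes A :: "'a set"
  assumes "mult_char chi"
  shows "(\<Sum>c\<in>UNIV. norm (chi c * of_real ((norm (\<Sum>a\<in>A. psi (a * c)))\<^sup>2)))
       = real CARD('a) * real (card A) - (real (card A))\<^sup>2"
proof -
  have "(\<Sum>c\<in>UNIV. norm (chi c * of_real ((norm (\<Sum>a\<in>A. psi (a * c)))\<^sup>2)))
      = (\<Sum>c\<in>UNIV - {0}. (norm (\<Sum>a\<in>A. psi (a * c)))\<^sup>2)"
    by (simp add: norm_mult norm_power norm_mult_char_eq[OF assms] Collect_neg_eq Compl_eq_Diff_UNIV)
  also have "\<dots> = (\<Sum>c\<in>UNIV. (norm (\<Sum>a\<in>A. psi (a * c)))\<^sup>2) - (norm (\<Sum>a\<in>A. psi (a * 0)))\<^sup>2"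
    by (simp add: sum_diff1)
  also have "\<dots> = real CARD('a) * real (card A) - (real (card A))\<^sup>2"
    by (simp add: sum_norm_char_sum psi_zero)
  finally show ?thesis .
qed

lemma mult_char_diff_eq_one_iff_same_arg:
  fixes A :: "'a set"
  assumes chi: "mult_char chi" "\<exists>x. x \<noteq> 0 \<and> chi x \<noteq> 1"
    and card_A: "(card A)\<^sup>2 = CARD('a)"
  shows "(\<forall>a\<in>A. \<forall>b\<in>A. a \<noteq> b \<longrightarrow> chi (a - b) = 1) \<longleftrightarrow>
    (\<forall>c. c \<noteq> 0 \<longrightarrow>
      same_arg (chi c * of_real ((norm (\<Sum>a\<in>A. psi (a * c)))\<^sup>2)) (\<Sum>c\<in>UNIV. chi c * psi c))"
proof -
  define k where "k = real (card A)"
  define G where "G = (\<Sum>c\<in>UNIV. chi c * psi c)"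
  define z where "z c = chi c * of_real ((norm (\<Sum>a\<in>A. psi (a * c)))\<^sup>2)" for c
  have k_sq: "k\<^sup>2 = CARD('a)"
    unfolding k_def by (metis card_A of_nat_power)
  then have "norm G = k"
    using norm_gauss_sum[OF chi] unfolding G_def k_def
    by (metis norm_ge_zero of_nat_0_le_iff power2_eq_iff_nonneg)
  moreover have "card A \<noteq> 0"
    using card_A CARD_field_gt_1[where 'a='a] by auto
  ultimately have "G \<noteq> 0" and G_eq: "G = of_real k * sgn G"
    by (auto simp: k_def sgn_eq)
  have "z 0 = 0"
    using chi(1) by (simp add: z_def mult_char_def)
  have sum_z: "(\<Sum>c\<in>UNIV. z c) = G * (\<Sum>a\<in>A. \<Sum>b\<in>A. cnj (chi (a - b)))"
    unfolding z_def G_def by (rule sum_mult_char_times_norm_char_sum[OF chi])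
  have "(\<Sum>c\<in>UNIV. norm (z c)) = k * (k * (k - 1))"
    using sum_norm_mult_char_times_norm_char_sum[OF chi(1), of A] k_sq
    by (simp add: z_def k_def power2_eq_square algebra_simps)
  then have "of_real (\<Sum>c\<in>UNIV. norm (z c)) * sgn G = (of_real k * sgn G) * of_real (k * (k - 1))"
    by (simp add: mult_ac)
  then have sum_norm_z: "of_real (\<Sum>c\<in>UNIV. norm (z c)) * sgn G = G * of_real (k * (k - 1))"
    by (simp only: G_eq[symmetric])
  have "(\<Sum>a\<in>A. \<Sum>b\<in>A. cnj (chi (a - b))) = of_real (k * (k - 1))
      \<longleftrightarrow> (\<Sum>c\<in>UNIV. z c) = of_real (\<Sum>c\<in>UNIV. norm (z c)) * sgn G"
    by (simp only: sum_z sum_norm_z mult_left_cancel[OF \<open>G \<noteq> 0\<close>])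
  also have "\<dots> \<longleftrightarrow> (\<forall>c. same_arg (z c) G)"
    using sum_eq_sum_norm_times_sgn_iff_same_arg[where I = UNIV and z = z, OF finite \<open>G \<noteq> 0\<close>]
    by simp
  also have "\<dots> \<longleftrightarrow> (\<forall>c. c \<noteq> 0 \<longrightarrow> same_arg (z c) G)"
    using \<open>z 0 = 0\<close> by (metis same_arg_def)
  finally show ?thesis
    using sum_cnj_mult_char_diff_eq_iff[OF chi(1) finite] unfolding z_def G_def k_def by simp
qed

end

section \<open>The canonical additive character\<close>

lemma e_p_of_int: "e_p (of_int k :: 'a::{field,finite}) = cis (2 * pi * k / CHAR('a))"
proof -
  define m where "m = (SOME m::int. of_int m = (of_int k :: 'a))"
  have "of_int m = (of_int k :: 'a)"
    unfolding m_def by (rule someI[of _ k]) simp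
  then have "(of_int k :: 'a) = of_int m"
    by (rule sym)
  then have "[k = m] (mod int CHAR('a))"
    by (simp only: of_int_eq_iff_cong_CHAR)
  then obtain t where t: "m = k + int CHAR('a) * t"
    by (auto simp: cong_iff_lin)
  have "real CHAR('a) > 0"
    using prime_CHAR_finite_field[where 'a='a] by (simp add: prime_gt_0_nat)
  then have "e_p (of_int k :: 'a) = cis (2 * pi * k / CHAR('a) + 2 * pi * t)"
    by (simp add: e_p_def t field_simps flip: m_def)
  also have "\<dots> = cis (2 * pi * k / CHAR('a))"
    by (simp only: cis_mult[symmetric] cis_multiple_2pi Ints_of_int mult_1_right)
  finally show ?thesis .
qed

lemma e_p_of_int_add:
  "e_p (of_int a + of_int b :: 'a::{field,finite}) = e_p (of_int a :: 'a) * e_p (of_int b :: 'a)"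
  unfolding of_int_add[symmetric] e_p_of_int by (simp add: cis_mult add_divide_distrib distrib_left)

lemma e_p_of_int_eq_1_iff: "e_p (of_int k :: 'a::{field,finite}) = 1 \<longleftrightarrow> (of_int k :: 'a) = 0"
proof -
  have "real CHAR('a) \<noteq> 0"
    using prime_CHAR_finite_field[where 'a='a] by (simp add: prime_gt_0_nat)
  have "2 * pi * k / CHAR('a) = k / CHAR('a) * (2 * pi)"
    by simp
  then have "e_p (of_int k :: 'a) = 1 \<longleftrightarrow> (\<exists>n::int. k / CHAR('a) * (2 * pi) = of_int n * (2 * pi))"
    unfolding e_p_of_int cis_eq_1_iff by (simp only:)
  also have "\<dots> \<longleftrightarrow> (\<exists>n::int. real_of_int k = real_of_int n * real CHAR('a))"
    using \<open>real CHAR('a) \<noteq> 0\<close> by (simp add: divide_eq_eq)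
  also have "\<dots> \<longleftrightarrow> (\<exists>n. k = n * int CHAR('a))"
  proof -
    have "real_of_int n * real CHAR('a) = real_of_int (n * int CHAR('a))" for n
      by simp
    then show ?thesis
      by (simp only: of_int_eq_iff)
  qed
  also have "\<dots> \<longleftrightarrow> (of_int k :: 'a) = 0"
    unfolding of_int_eq_0_iff_char_dvd dvd_def by (simp only: mult.commute)
  finally show ?thesis .
qed

context
  fixes n :: nat
  assumes card_eq: "CARD('a::{field,finite}) = CHAR('a) ^ n"
begin

lemma fdeg_eq: "fdeg TYPE('a) = n"
proof -
  have "CHAR('a) > 1"
    using prime_CHAR_finite_field prime_gt_1_nat by blast
  then show ?thesis
    unfolding fdeg_def using card_eq by (intro the_equality) (auto simp: power_inject_exp)
qed

lemma abs_trace_eq: "abs_trace (x::'a) = (\<Sum>i<n. x ^ CHAR('a) ^ i)"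
  unfolding abs_trace_def fdeg_eq ..

lemma abs_trace_add: "abs_trace (x + y :: 'a) = abs_trace x + abs_trace y"
  by (simp add: abs_trace_eq freshmans_dream' prime_CHAR_finite_field sum.distrib)

text \<open>Frobenius permutes the summands of the trace cyclically, because \<open>x\<^sup>q = x\<close>.\<close>
lemma abs_trace_power_CHAR: "abs_trace (x::'a) ^ CHAR('a) = abs_trace x"
proof -
  define f where "f i = x ^ CHAR('a) ^ i" for i
  have "abs_trace x ^ CHAR('a) = (\<Sum>i<n. f (Suc i))"
    by (simp add: abs_trace_eq f_def freshmans_dream_sum prime_CHAR_finite_field
        flip: power_mult) (simp add: mult.commute)
  also have "\<dots> = (\<Sum>i<n. f i)"
    using sum.lessThan_Suc_shift[of f n] field_power_card[of x] card_eq
    by (simp add: f_def add.commute)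
  finally show ?thesis
    by (simp add: abs_trace_eq f_def)
qed

lemma abs_trace_in_prime_field: "\<exists>k::int. abs_trace (x::'a) = of_int k"
proof -
  obtain k where "abs_trace x = of_nat k"
    using power_CHAR_eq_self_imp_of_nat[OF abs_trace_power_CHAR] by blast
  then have "abs_trace x = of_int (int k)"
    by simp
  then show ?thesis ..
qed

text \<open>The trace is a polynomial of degree \<open>p\<^sup>n\<^sup>-\<^sup>1 < q\<close>, so it does not vanish identically.\<close>
lemma abs_trace_nonzero: "\<exists>x::'a. abs_trace x \<noteq> 0"
proof -
  let ?p = "CHAR('a)"
  let ?P = "\<Sum>i<n. monom (1::'a) (?p ^ i)"
  have p2: "?p \<ge> 2"
    using prime_CHAR_finite_field prime_ge_2_nat by blast
  have "n \<noteq> 0"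
  proof
    assume "n = 0"
    then show False
      using card_eq CARD_field_gt_1[where 'a='a] by simp
  qed
  have "coeff ?P (?p ^ (n - 1)) = (\<Sum>i\<in>{n - 1}. 1)"
    unfolding coeff_sum coeff_monom
    using p2 \<open>n \<noteq> 0\<close> by (intro sum.mono_neutral_cong_right) (auto simp: power_inject_exp)
  then have "?P \<noteq> 0"
    by auto
  have "degree ?P \<le> ?p ^ (n - 1)"
    using p2 by (intro degree_sum_le) (auto intro!: order.trans[OF degree_monom_le] power_increasing)
  also have "?p ^ (n - 1) < ?p ^ n"
    using p2 \<open>n \<noteq> 0\<close> by (intro power_strict_increasing) auto
  finally have "card {z. poly ?P z = 0} < CARD('a)"
    using card_poly_roots_bound[OF \<open>?P \<noteq> 0\<close>] card_eq by linarith
  then have "{z. poly ?P z = 0} \<noteq> UNIV"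
    by auto
  then obtain x where "poly ?P x \<noteq> 0"
    by auto
  moreover have "poly ?P x = abs_trace x"
    by (simp add: abs_trace_eq poly_sum poly_monom)
  ultimately show ?thesis
    by metis
qed

lemma additive_char_abs_trace: "additive_char (\<lambda>x::'a. e_p (abs_trace x))"
proof
  fix x y :: 'a
  obtain a b where "abs_trace x = of_int a" and "abs_trace y = of_int b"
    using abs_trace_in_prime_field by metis
  then show "e_p (abs_trace (x + y)) = e_p (abs_trace x) * e_p (abs_trace y)"
    by (simp add: abs_trace_add e_p_of_int_add)
  show "norm (e_p (abs_trace x)) = 1"
    by (simp add: e_p_def)
next
  obtain x :: 'a where "abs_trace x \<noteq> 0"
    using abs_trace_nonzero by blast
  moreover obtain k where "abs_trace x = of_int k"
    using abs_trace_in_prime_field by blast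
  ultimately show "\<exists>x::'a. e_p (abs_trace x) \<noteq> 1"
    using e_p_of_int_eq_1_iff by metis
qed

end

theorem proposition3p2:
  fixes p :: nat and chi :: "'a::{field,finite} \<Rightarrow> complex" and A :: "'a set"
  assumes "prime p" and "odd p" and "CHAR('a) = p"
    and "\<exists>m. CARD('a) = p ^ (2 * m)"
    and "mult_char chi" and "\<exists>x. x \<noteq> 0 \<and> chi x \<noteq> 1"
    and "real (card A) = sqrt (real CARD('a))"
  shows "(\<forall>a\<in>A. \<forall>b\<in>A. a \<noteq> b \<longrightarrow> chi (a - b) = 1) \<longleftrightarrow>
         (\<forall>c. c \<noteq> 0 \<longrightarrow> same_arg (chi c * complex_of_real ((cmod (S_sum A c))\<^sup>2)) (gauss_sum chi))"
proof -
  obtain m where "CARD('a) = CHAR('a) ^ (2 * m)"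
    using assms(3,4) by blast
  then interpret additive_char "\<lambda>x::'a. e_p (abs_trace x)"
    by (rule additive_char_abs_trace)
  have "(real (card A))\<^sup>2 = real CARD('a)"
    by (simp only: assms(7) real_sqrt_pow2 of_nat_0_le_iff)
  then have "(card A)\<^sup>2 = CARD('a)"
    by (simp only: of_nat_power[symmetric] of_nat_eq_iff)
  then show ?thesis
    unfolding S_sum_def gauss_sum_def by (rule mult_char_diff_eq_one_iff_same_arg[OF assms(5,6)])
qed

end
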